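(* Consider the optimal clique cover delivery problem for a system with $K$ users and a set $\mathcal{W}$ of subfiles to be delivered. The Size-Aware Coded Multicast (SACM) algorithm, defined as follows, achieves a $(1+\log K)$-approximation to this problem (its output is a set of cliques covering $\mathcal{W}$ whose total size is at most $(1+\log K)$ times the optimal value). SACM: set $\mathscr{C}=\emptyset$, $\mathcal{E}=\mathcal{W}$; while $\mathcal{E}\neq\emptyset$: compute $\mathcal{P}^*=\mathrm{SBO}(\mathcal{E})$, set $\mathscr{C}=\mathscr{C}\cup\{\mathcal{P}^*\}$ and $\mathcal{E}=\mathcal{E}\setminus\mathcal{P}^*$; output $\mathscr{C}$. Here $\mathrm{SBO}(\mathcal{E})$ is computed as: let $\mathcal{M}=\{k\in[K]: W_{k,\mathcal{A}}\in\mathcal{E}\text{ for some }\mathcal{A}\}$ and $\mathscr{T}$ the set of nonempty subsets of $\mathcal{M}$; for each $\mathcal{T}\in\mathscr{T}$ and $j\in\mathcal{T}$ let $\mathcal{L}_{j,\mathcal{T}}=\{W_{j,\mathcal{A}}\in\mathcal{E}:\mathcal{T}\setminus\{j\}\subseteq\mathcal{A}\}$ (replaced by $\{W_*\}$ with $\|W_*\|=\infty$ if empty), let $V_{j,\mathcal{T}}$ be an element of $\mathcal{L}_{j,\mathcal{T}}$ of minimum size (ties arbitrary), and $\mathcal{R}_{\mathcal{T}}=\{V_{j,\mathcal{T}}:j\in\mathcal{T}\}$ with $\|\mathcal{R}_{\mathcal{T}}\|=\max_{j\in\mathcal{T}}\|V_{j,\mathcal{T}}\|$; return a set $\mathcal{R}_{\mathcal{T}}$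 maximizing $|\mathcal{T}|/\|\mathcal{R}_{\mathcal{T}}\|$ over $\mathcal{T}\in\mathscr{T}$ (ties arbitrary).
   Context: Setting: a server and $K$ users, $[K]=\{1,\dots,K\}$; user $k$ requests file $W_k$. For $k\in[K]$ and $\mathcal{A}\subseteq[K]\setminus\{k\}$, $W_{k,\mathcal{A}}$ denotes the subfile of $W_k$ consisting of the bits cached exactly by the users in $\mathcal{A}$, and $\|W_{k,\mathcal{A}}\|$ is its size in bits (arbitrary nonnegative integers). The set of subfiles to be delivered is $\mathcal{W}=\{W_{k,\mathcal{A}}: k\in[K],\ \mathcal{A}\subseteq[K]\setminus\{k\},\ \|W_{k,\mathcal{A}}\|\neq 0\}$. A clique (feasible packet) is a nonempty set $\mathcal{P}\subseteq\mathcal{W}$ of the form $\{W_{k,\mathcal{A}_k}:k\in\mathcal{M}'\}$ for some $\mathcal{M}'\subseteq[K]$ (at most one subfile per user) such that $k\in\mathcal{A}_{k'}$ for all distinct $k,k'\in\mathcal{M}'$; it models sending the bitwise XOR of its subfiles (zero-padded to the longest one). Its size is $\|\mathcal{P}\|=\max_{W\in\mathcal{P}}\|W\|$. The optimal clique cover delivery problem: choose a set of cliques whose union is $\mathcal{W}$ minimizing the sum of their sizes. *)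

theory Defs
  imports Complex_Main "HOL-Library.Extended_Real"
begin

text \<open>Users are [K] = {1..K}. The subfile W_{k,A} is represented by the pair (k, A);
  sz k A is its size in bits.\<close>

type_synonym subfile = "nat \<times> nat set"

definition subfiles :: "nat \<Rightarrow> (nat \<Rightarrow> nat set \<Rightarrow> nat) \<Rightarrow> subfile set" where
  "subfiles K sz = {(k, A). k \<in> {1..K} \<and> A \<subseteq> {1..K} - {k} \<and> sz k A \<noteq> 0}"

definition is_clique :: "nat \<Rightarrow> (nat \<Rightarrow> nat set \<Rightarrow> nat) \<Rightarrow> subfile set \<Rightarrow> bool" where
  "is_clique K sz P \<longleftrightarrow> P \<noteq> {} \<and> P \<subseteq> subfiles K sz \<and> inj_on fst P \<and>
     (\<forall>(k, A)\<in>P. \<forall>(k', A')\<in>P. k \<noteq> k' \<longrightarrow> k \<in> A')"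

definition clique_size :: "(nat \<Rightarrow> nat set \<Rightarrow> nat) \<Rightarrow> subfile set \<Rightarrow> nat" where
  "clique_size sz P = Max ((\<lambda>(k, A). sz k A) ` P)"

definition is_clique_cover :: "nat \<Rightarrow> (nat \<Rightarrow> nat set \<Rightarrow> nat) \<Rightarrow> subfile set set \<Rightarrow> bool" where
  "is_clique_cover K sz C \<longleftrightarrow> (\<forall>P\<in>C. is_clique K sz P) \<and> \<Union>C = subfiles K sz"

definition cover_cost :: "(nat \<Rightarrow> nat set \<Rightarrow> nat) \<Rightarrow> subfile set set \<Rightarrow> nat" where
  "cover_cost sz C = (\<Sum>P\<in>C. clique_size sz P)"

definition sbo_M :: "nat \<Rightarrow> subfile set \<Rightarrow> nat set" where
  "sbo_M K E = {k \<in> {1..K}. \<exists>A. (k, A) \<in> E}"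

definition sbo_L :: "subfile set \<Rightarrow> nat \<Rightarrow> nat set \<Rightarrow> subfile set" where
  "sbo_L E j T = {(k, A) \<in> E. k = j \<and> T - {j} \<subseteq> A}"

text \<open>Size of V_{j,T}: the minimum size in L_{j,T}, or infinity (the dummy W_* ) if empty.\<close>
definition sbo_Vsize :: "(nat \<Rightarrow> nat set \<Rightarrow> nat) \<Rightarrow> subfile set \<Rightarrow> nat \<Rightarrow> nat set \<Rightarrow> ereal" where
  "sbo_Vsize sz E j T =
     (if sbo_L E j T = {} then \<infinity> else ereal (Min ((\<lambda>(k, A). sz k A) ` sbo_L E j T)))"

definition sbo_Rsize :: "(nat \<Rightarrow> nat set \<Rightarrow> nat) \<Rightarrow> subfile set \<Rightarrow> nat set \<Rightarrow> ereal" where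
  "sbo_Rsize sz E T = Max ((\<lambda>j. sbo_Vsize sz E j T) ` T)"

definition sbo_ratio :: "(nat \<Rightarrow> nat set \<Rightarrow> nat) \<Rightarrow> subfile set \<Rightarrow> nat set \<Rightarrow> ereal" where
  "sbo_ratio sz E T = ereal (real (card T)) / sbo_Rsize sz E T"

text \<open>P is a possible output of SBO(E) (for some resolution of the ties).\<close>
definition sbo_output :: "nat \<Rightarrow> (nat \<Rightarrow> nat set \<Rightarrow> nat) \<Rightarrow> subfile set \<Rightarrow> subfile set \<Rightarrow> bool" where
  "sbo_output K sz E P \<longleftrightarrow>
     (\<exists>T V. T \<subseteq> sbo_M K E \<and> T \<noteq> {} \<and>
        (\<forall>T'. T' \<subseteq> sbo_M K E \<and> T' \<noteq> {} \<longrightarrow> sbo_ratio sz E T' \<le> sbo_ratio sz E T) \<and>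
        (\<forall>j\<in>T. V j \<in> sbo_L E j T \<and>
                 (\<forall>w\<in>sbo_L E j T. (case V j of (k, A) \<Rightarrow> sz k A) \<le> (case w of (k, A) \<Rightarrow> sz k A))) \<and>
        P = V ` T)"

text \<open>sacm_run K sz E C: running the SACM loop from the remaining set E
  (with the current clique collection empty) can produce the output C.\<close>
inductive sacm_run :: "nat \<Rightarrow> (nat \<Rightarrow> nat set \<Rightarrow> nat) \<Rightarrow> subfile set \<Rightarrow> subfile set set \<Rightarrow> bool"
  for K sz where
  finish: "sacm_run K sz {} {}"
| step: "E \<noteq> {} \<Longrightarrow> sbo_output K sz E P \<Longrightarrow> sacm_run K sz (E - P) C
          \<Longrightarrow> sacm_run K sz E (insert P C)"

end

theory Submission
  imports Defs "HOL-Analysis.Harmonic_Numbers"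
begin

(* Chvatal's analysis of greedy set cover, weighted by clique sizes. Fix any clique cover C'
   and let Phi(E) = sum of ||Q|| * H(card (Q Int E)) over Q in C', where E is the set of subfiles
   still to be delivered and H is the harmonic number. When SACM sends P = SBO(E), each Q Int E
   is itself a feasible packet, so its users form a candidate of SBO whose packet has size at
   most ||Q||; maximality of the chosen ratio gives ||P|| / card P <= ||Q|| / card (Q Int E).
   Spreading ||P|| evenly over the subfiles of P therefore charges Q at most
   ||Q|| * (H n - H (n - m)) with n = card (Q Int E) and m = card (Q Int P), so Phi drops by
   at least ||P|| in every step. The total cost is thus at most Phi(W) <= H K * cost(C')
   <= (1 + ln K) * cost(C'), since a clique holds at most one subfile per user. *)

lemma harm_diff_ge:
  assumes "m \<le> n"
  shows "real m / real n \<le> harm n - harm (n - m)"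
  using assms
proof (induction m)
  case 0
  then show ?case by simp
next
  case (Suc m)
  have "n - m = Suc (n - Suc m)" using Suc.prems by simp
  then have "harm (n - m) = harm (n - Suc m) + 1 / real (n - m)"
    by (simp add: harm_Suc divide_inverse)
  moreover have "1 / real n \<le> 1 / real (n - m)"
    using Suc.prems by (intro divide_left_mono) auto
  moreover have "real m / real n \<le> harm n - harm (n - m)"
    using Suc by simp
  ultimately show ?case by (simp add: add_divide_distrib)
qed

lemma harm_le_one_plus_ln:
  assumes "n > 0"
  shows "harm n \<le> 1 + ln (real n)"
  using euler_mascheroni_sequence_decreasing[of 1 n] assms by (simp add: harm_def)

lemma finite_subfiles: "finite (subfiles K sz)"
proof (rule finite_subset)
  show "subfiles K sz \<subseteq> {1..K} \<times> Pow {1..K}" by (auto simp: subfiles_def)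
qed simp

lemma subfiles_subset_finite: "E \<subseteq> subfiles K sz \<Longrightarrow> finite E"
  by (rule finite_subset[OF _ finite_subfiles])

lemma subfile_size_pos: "(k, A) \<in> subfiles K sz \<Longrightarrow> 0 < sz k A"
  by (simp add: subfiles_def)

definition feasible_packet :: "subfile set \<Rightarrow> bool" where
  "feasible_packet Q \<longleftrightarrow> inj_on fst Q \<and> (\<forall>(k, A)\<in>Q. \<forall>(k', A')\<in>Q. k \<noteq> k' \<longrightarrow> k \<in> A')"

lemma is_clique_iff_feasible_packet:
  "is_clique K sz P \<longleftrightarrow> P \<noteq> {} \<and> P \<subseteq> subfiles K sz \<and> feasible_packet P"
  unfolding is_clique_def feasible_packet_def by blast

lemma feasible_packet_subset: "feasible_packet Q \<Longrightarrow> R \<subseteq> Q \<Longrightarrow> feasible_packet R"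
  unfolding feasible_packet_def by (blast intro: inj_on_subset)

lemma card_feasible_packet_le:
  assumes "Q \<subseteq> subfiles K sz" "feasible_packet Q"
  shows "card Q \<le> K"
proof -
  have "card Q = card (fst ` Q)"
    using assms(2) by (simp add: feasible_packet_def card_image)
  also have "\<dots> \<le> card {1..K}"
    using assms(1) by (intro card_mono) (auto simp: subfiles_def)
  finally show ?thesis by simp
qed

lemma size_le_clique_size: "finite P \<Longrightarrow> (k, A) \<in> P \<Longrightarrow> sz k A \<le> clique_size sz P"
  unfolding clique_size_def by (rule Max_ge) force+

lemma clique_size_pos:
  assumes "P \<subseteq> subfiles K sz" "P \<noteq> {}"
  shows "0 < clique_size sz P"
proof -
  obtain k A where kA: "(k, A) \<in> P" using assms(2) by auto
  have "0 < sz k A" using subsetD[OF assms(1) kA] by (rule subfile_size_pos)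
  also have "sz k A \<le> clique_size sz P"
    using subfiles_subset_finite[OF assms(1)] kA by (rule size_le_clique_size)
  finally show ?thesis .
qed

lemma clique_cover_finite: "is_clique_cover K sz C \<Longrightarrow> finite C"
  by (rule finite_subset[of _ "Pow (subfiles K sz)"])
     (auto simp: is_clique_cover_def is_clique_def finite_subfiles)

lemma clique_cover_clique:
  "is_clique_cover K sz C \<Longrightarrow> Q \<in> C \<Longrightarrow> Q \<subseteq> subfiles K sz \<and> feasible_packet Q"
  by (simp add: is_clique_cover_def is_clique_iff_feasible_packet)

lemma sbo_Vsize_eq_infinity_iff: "sbo_Vsize sz E j T = \<infinity> \<longleftrightarrow> sbo_L E j T = {}"
  by (simp add: sbo_Vsize_def)

lemma finite_sbo_L: "finite E \<Longrightarrow> finite (sbo_L E j T)"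
  unfolding sbo_L_def by (rule finite_subset) auto

lemma sbo_Vsize_le:
  "finite E \<Longrightarrow> (k, A) \<in> sbo_L E j T \<Longrightarrow> sbo_Vsize sz E j T \<le> sz k A"
  by (auto simp: sbo_Vsize_def finite_sbo_L intro!: Min_le)

lemma sbo_Vsize_eq:
  assumes "finite E" "v \<in> sbo_L E j T" "\<forall>w\<in>sbo_L E j T. case_prod sz v \<le> case_prod sz w"
  shows "sbo_Vsize sz E j T = case_prod sz v"
proof -
  have "Min (case_prod sz ` sbo_L E j T) = case_prod sz v"
    using assms by (intro Min_eqI) (auto simp: finite_sbo_L)
  then show ?thesis using assms(2) by (auto simp: sbo_Vsize_def)
qed

lemma sbo_Vsize_ge_1:
  assumes "E \<subseteq> subfiles K sz"
  shows "1 \<le> sbo_Vsize sz E j T"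
proof (cases "sbo_L E j T = {}")
  case False
  have "\<forall>(k, A)\<in>sbo_L E j T. 1 \<le> sz k A"
    using assms subfile_size_pos[where K = K] by (force simp: sbo_L_def Suc_le_eq)
  then have "1 \<le> Min (case_prod sz ` sbo_L E j T)"
    using False subfiles_subset_finite[OF assms] by (auto simp: finite_sbo_L)
  then show ?thesis using False by (simp add: sbo_Vsize_def)
qed (simp add: sbo_Vsize_def)

lemma sbo_Rsize_ge_Vsize: "finite T \<Longrightarrow> j \<in> T \<Longrightarrow> sbo_Vsize sz E j T \<le> sbo_Rsize sz E T"
  unfolding sbo_Rsize_def by simp

lemma sbo_ratio_ge_packet:
  assumes E: "E \<subseteq> subfiles K sz" and Q: "Q \<subseteq> E" "Q \<noteq> {}" "feasible_packet Q"
    and s: "\<forall>(k, A)\<in>Q. sz k A \<le> s"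
  shows "ereal (real (card Q) / real s) \<le> sbo_ratio sz E (fst ` Q)"
proof -
  have finE: "finite E" using E by (rule subfiles_subset_finite)
  have finT: "finite (fst ` Q)" using finite_subset[OF Q(1) finE] by simp
  have Vs: "sbo_Vsize sz E j (fst ` Q) \<le> s" if j: "j \<in> fst ` Q" for j
  proof -
    obtain A where jA: "(j, A) \<in> Q" using j by force
    have "(j, A) \<in> sbo_L E j (fst ` Q)"
      using jA Q(1,3) by (force simp: sbo_L_def feasible_packet_def)
    then have "sbo_Vsize sz E j (fst ` Q) \<le> sz j A" by (rule sbo_Vsize_le[OF finE])
    also have "sz j A \<le> s" using s jA by auto
    finally show ?thesis by simp
  qed
  obtain j where "j \<in> fst ` Q" using Q(2) by blast
  then have "1 \<le> sbo_Rsize sz E (fst ` Q)"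
    using sbo_Rsize_ge_Vsize sbo_Vsize_ge_1[OF E] finT order_trans by metis
  moreover have "sbo_Rsize sz E (fst ` Q) \<le> s"
    unfolding sbo_Rsize_def using Vs finT Q(2) by simp
  ultimately obtain r where r: "sbo_Rsize sz E (fst ` Q) = ereal r" "1 \<le> r" "r \<le> s"
    by (cases "sbo_Rsize sz E (fst ` Q)") auto
  have "card (fst ` Q) = card Q"
    using Q(3) by (simp add: feasible_packet_def card_image)
  then have "sbo_ratio sz E (fst ` Q) = ereal (real (card Q) / r)"
    using r by (simp add: sbo_ratio_def)
  moreover have "real (card Q) / real s \<le> real (card Q) / r"
    using r by (intro divide_left_mono) auto
  ultimately show ?thesis by simp
qed

lemma sbo_L_memD: "(k, A) \<in> sbo_L E j T \<Longrightarrow> (k, A) \<in> E \<and> k = j \<and> T - {j} \<subseteq> A"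
  by (auto simp: sbo_L_def)

lemma sbo_output_clique:
  assumes E: "E \<subseteq> subfiles K sz" and out: "sbo_output K sz E P"
  shows "is_clique K sz P \<and> P \<subseteq> E"
proof -
  obtain T V where T: "T \<noteq> {}" and V: "\<And>j. j \<in> T \<Longrightarrow> V j \<in> sbo_L E j T" and P: "P = V ` T"
    using out unfolding sbo_output_def by blast
  have VjT: "V j \<in> E \<and> fst (V j) = j \<and> T - {j} \<subseteq> snd (V j)" if "j \<in> T" for j
    using sbo_L_memD[of "fst (V j)" "snd (V j)"] V[OF that] by simp
  have "inj_on fst P"
  proof (rule inj_onI)
    fix x y assume "x \<in> P" "y \<in> P" "fst x = fst y"
    then show "x = y" unfolding P using VjT by auto
  qed
  moreover have "k \<in> A'" if kA: "(k, A) \<in> P" "(k', A') \<in> P" "k \<noteq> k'" for k A k' A'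
  proof -
    obtain j j' where "j \<in> T" "j' \<in> T" "V j = (k, A)" "V j' = (k', A')"
      using kA(1,2) P by (metis imageE)
    then show ?thesis using VjT[of j] VjT[of j'] kA(3) by auto
  qed
  ultimately have "feasible_packet P" unfolding feasible_packet_def by blast
  moreover have "P \<subseteq> E" using VjT P by blast
  ultimately show ?thesis using E T P by (auto simp: is_clique_iff_feasible_packet)
qed

lemma sbo_output_ratio_max:
  assumes E: "E \<subseteq> subfiles K sz" and out: "sbo_output K sz E P"
    and T': "T' \<subseteq> sbo_M K E" "T' \<noteq> {}"
  shows "sbo_ratio sz E T' \<le> ereal (real (card P) / real (clique_size sz P))"
proof -
  obtain T V where T: "T \<subseteq> sbo_M K E" "T \<noteq> {}"
    and opt: "\<forall>T'. T' \<subseteq> sbo_M K E \<and> T' \<noteq> {} \<longrightarrow> sbo_ratio sz E T' \<le> sbo_ratio sz E T"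
    and VL: "\<forall>j\<in>T. V j \<in> sbo_L E j T \<and> (\<forall>w\<in>sbo_L E j T. case_prod sz (V j) \<le> case_prod sz w)"
    and P: "P = V ` T"
    using out unfolding sbo_output_def by blast
  have V: "V j \<in> sbo_L E j T" if "j \<in> T" for j using VL that by blast
  have Vmin: "\<forall>w\<in>sbo_L E j T. case_prod sz (V j) \<le> case_prod sz w" if "j \<in> T" for j
    using VL that by blast
  have finE: "finite E" using E by (rule subfiles_subset_finite)
  have finT: "finite T" using T(1) by (rule finite_subset) (simp add: sbo_M_def)
  have "fst (V j) = j" if "j \<in> T" for j
    using sbo_L_memD[of "fst (V j)" "snd (V j)"] V[OF that] by simp
  then have "inj_on V T" by (rule inj_on_inverseI)
  then have card: "card P = card T" unfolding P by (rule card_image)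
  have Vsize: "sbo_Vsize sz E j T = case_prod sz (V j)" if "j \<in> T" for j
    by (rule sbo_Vsize_eq[OF finE V[OF that] Vmin[OF that]])
  have "sbo_Rsize sz E T = Max ((\<lambda>j. ereal (real (case_prod sz (V j)))) ` T)"
    unfolding sbo_Rsize_def using Vsize by (intro arg_cong[where f = Max] image_cong) simp_all
  also have "\<dots> = Max ((\<lambda>x. ereal (real x)) ` case_prod sz ` P)"
    by (simp add: P image_image)
  also have "\<dots> = ereal (real (clique_size sz P))"
    unfolding clique_size_def using finT T(2) P
    by (intro mono_Max_commute[symmetric]) (auto simp: mono_def)
  finally have Rsize: "sbo_Rsize sz E T = ereal (real (clique_size sz P))" .
  have "P \<subseteq> subfiles K sz" "P \<noteq> {}"
    using sbo_output_clique[OF E out] E by (auto simp: is_clique_def)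
  then have "0 < clique_size sz P" by (rule clique_size_pos)
  have "sbo_ratio sz E T' \<le> sbo_ratio sz E T" using opt T' by blast
  also have "\<dots> = ereal (real (card P) / real (clique_size sz P))"
    using \<open>0 < clique_size sz P\<close> by (simp add: sbo_ratio_def Rsize card)
  finally show ?thesis .
qed

lemma sbo_output_greedy:
  assumes E: "E \<subseteq> subfiles K sz" and out: "sbo_output K sz E P"
    and Q: "Q \<subseteq> E" "Q \<noteq> {}" "feasible_packet Q" and s: "\<forall>(k, A)\<in>Q. sz k A \<le> s"
  shows "real (card Q) * real (clique_size sz P) \<le> real (card P) * real s"
proof -
  have P: "P \<noteq> {}" "P \<subseteq> E"
    using sbo_output_clique[OF E out] by (auto simp: is_clique_def)
  have "fst ` Q \<subseteq> sbo_M K E"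
  proof
    fix k assume "k \<in> fst ` Q"
    then obtain A where "(k, A) \<in> E" using Q(1) by force
    then show "k \<in> sbo_M K E" using E by (auto simp: sbo_M_def subfiles_def)
  qed
  then have "sbo_ratio sz E (fst ` Q) \<le> ereal (real (card P) / real (clique_size sz P))"
    using Q(2) by (intro sbo_output_ratio_max[OF E out]) auto
  with sbo_ratio_ge_packet[OF E Q s]
  have "ereal (real (card Q) / real s) \<le> ereal (real (card P) / real (clique_size sz P))"
    by (rule order_trans)
  then have ratio: "real (card Q) / real s \<le> real (card P) / real (clique_size sz P)"
    by simp
  obtain k A where kA: "(k, A) \<in> Q" using Q(2) by auto
  have "(k, A) \<in> subfiles K sz" using kA Q(1) E by blast
  then have "0 < sz k A" by (rule subfile_size_pos)
  also have "sz k A \<le> s" using s kA by auto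
  finally have "0 < s" .
  have "0 < clique_size sz P" using clique_size_pos[OF order_trans[OF P(2) E] P(1)] .
  with ratio \<open>0 < s\<close> show ?thesis by (simp add: divide_le_eq le_divide_eq)
qed

lemma sbo_ratio_eq_0_if_L_empty:
  assumes "finite T" "j \<in> T" "sbo_L E j T = {}"
  shows "sbo_ratio sz E T = 0"
proof -
  have "sbo_Vsize sz E j T \<le> sbo_Rsize sz E T" using assms(1,2) by (rule sbo_Rsize_ge_Vsize)
  moreover have "sbo_Vsize sz E j T = \<infinity>" using assms(3) by (simp add: sbo_Vsize_def)
  ultimately have "sbo_Rsize sz E T = \<infinity>" by simp
  then show ?thesis by (simp add: sbo_ratio_def)
qed

lemma sbo_ratio_singleton_pos:
  assumes E: "E \<subseteq> subfiles K sz" and jA: "(j, A) \<in> E"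
  shows "0 < sbo_ratio sz E {j}"
proof -
  have "sbo_L E j {j} \<noteq> {}" using jA by (auto simp: sbo_L_def)
  then have "sbo_Vsize sz E j {j} \<noteq> \<infinity>" by (simp add: sbo_Vsize_eq_infinity_iff)
  moreover have "1 \<le> sbo_Vsize sz E j {j}" using E by (rule sbo_Vsize_ge_1)
  ultimately obtain r where "sbo_Vsize sz E j {j} = ereal r" "1 \<le> r"
    by (cases "sbo_Vsize sz E j {j}") auto
  then show ?thesis by (simp add: sbo_ratio_def sbo_Rsize_def)
qed

lemma sbo_output_exists:
  assumes E: "E \<subseteq> subfiles K sz" and "E \<noteq> {}"
  shows "\<exists>P. sbo_output K sz E P"
proof -
  define F where "F = {T. T \<subseteq> sbo_M K E \<and> T \<noteq> {}}"
  have finE: "finite E" using E by (rule subfiles_subset_finite)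
  have finM: "finite (sbo_M K E)" by (simp add: sbo_M_def)
  then have finF: "finite F" unfolding F_def by simp
  obtain j A where jA: "(j, A) \<in> E" using \<open>E \<noteq> {}\<close> by auto
  then have j: "{j} \<in> F" using E by (auto simp: F_def sbo_M_def subfiles_def)
  have "Max (sbo_ratio sz E ` F) \<in> sbo_ratio sz E ` F" using finF j by (intro Max_in) auto
  then obtain T where T: "T \<in> F" and T_eq: "sbo_ratio sz E T = Max (sbo_ratio sz E ` F)"
    by auto
  have Tmax: "sbo_ratio sz E T' \<le> sbo_ratio sz E T" if "T' \<in> F" for T'
    unfolding T_eq using finF that by simp
  have TM: "T \<subseteq> sbo_M K E" "T \<noteq> {}" using T by (simp_all add: F_def)
  have finT: "finite T" using finite_subset[OF TM(1) finM] .
  have L: "sbo_L E j' T \<noteq> {}" if "j' \<in> T" for j'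
  proof
    assume "sbo_L E j' T = {}"
    then have "sbo_ratio sz E T = 0" using finT that by (rule sbo_ratio_eq_0_if_L_empty[rotated 2])
    then show False using Tmax[OF j] sbo_ratio_singleton_pos[OF E jA] by simp
  qed
  define V where "V j' = arg_min_on (case_prod sz) (sbo_L E j' T)" for j'
  have "V j' \<in> sbo_L E j' T" if "j' \<in> T" for j'
    unfolding V_def using finite_sbo_L[OF finE] L[OF that] by (rule arg_min_if_finite(1))
  moreover have "\<forall>w\<in>sbo_L E j' T. case_prod sz (V j') \<le> case_prod sz w" if "j' \<in> T" for j'
    unfolding V_def using arg_min_least[OF finite_sbo_L[OF finE] L[OF that]] by blast
  ultimately have V: "\<forall>j'\<in>T. V j' \<in> sbo_L E j' T \<and>
      (\<forall>w\<in>sbo_L E j' T. case_prod sz (V j') \<le> case_prod sz w)"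
    by blast
  have opt: "\<forall>T'. T' \<subseteq> sbo_M K E \<and> T' \<noteq> {} \<longrightarrow> sbo_ratio sz E T' \<le> sbo_ratio sz E T"
    using Tmax by (simp add: F_def)
  have "sbo_output K sz E (V ` T)"
    unfolding sbo_output_def using TM opt V by blast
  then show ?thesis ..
qed

lemma sacm_run_exists:
  assumes "E \<subseteq> subfiles K sz"
  shows "\<exists>C. sacm_run K sz E C"
  using subfiles_subset_finite[OF assms] assms
proof (induction E rule: finite_psubset_induct)
  case (psubset E)
  show ?case
  proof (cases "E = {}")
    case True
    then show ?thesis using sacm_run.finish by blast
  next
    case False
    then obtain P where P: "sbo_output K sz E P" using sbo_output_exists[OF psubset.prems] by blast
    then have "P \<noteq> {}" "P \<subseteq> E"
      using sbo_output_clique[OF psubset.prems] by (auto simp: is_clique_def)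
    then obtain C where "sacm_run K sz (E - P) C" using psubset.IH psubset.prems by blast
    then show ?thesis using sacm_run.step[OF False P] by blast
  qed
qed

lemma sacm_run_partition:
  assumes "sacm_run K sz E C" "E \<subseteq> subfiles K sz"
  shows "(\<forall>P\<in>C. is_clique K sz P) \<and> \<Union>C = E \<and> finite C"
  using assms
proof (induction rule: sacm_run.induct)
  case (step E P C)
  have P: "is_clique K sz P \<and> P \<subseteq> E" using step.prems step.hyps(2) by (rule sbo_output_clique)
  have "E - P \<subseteq> subfiles K sz" using step.prems by blast
  then have "(\<forall>P\<in>C. is_clique K sz P) \<and> \<Union>C = E - P \<and> finite C" by (rule step.IH)
  with P show ?case by blast
qed simp

definition cover_potential :: "(nat \<Rightarrow> nat set \<Rightarrow> nat) \<Rightarrow> subfile set set \<Rightarrow> subfile set \<Rightarrow> real" where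
  "cover_potential sz C' E = (\<Sum>Q\<in>C'. real (clique_size sz Q) * harm (card (Q \<inter> E)))"

lemma greedy_charge_le_harm_drop:
  assumes E: "E \<subseteq> subfiles K sz" and out: "sbo_output K sz E P"
    and Q: "Q \<subseteq> subfiles K sz" "feasible_packet Q"
  shows "real (clique_size sz P) * real (card (Q \<inter> P)) / real (card P)
    \<le> real (clique_size sz Q) * (harm (card (Q \<inter> E)) - harm (card (Q \<inter> (E - P))))"
proof -
  define cP cQ where "cP = real (clique_size sz P)" and "cQ = real (clique_size sz Q)"
  define n m p where "n = card (Q \<inter> E)" and "m = card (Q \<inter> P)" and "p = card P"
  have P: "P \<noteq> {}" "P \<subseteq> E" using sbo_output_clique[OF E out] by (auto simp: is_clique_def)
  have finQ: "finite Q" using Q(1) by (rule subfiles_subset_finite)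
  have QP: "Q \<inter> P \<subseteq> Q \<inter> E" using P(2) by blast
  have nm: "card (Q \<inter> (E - P)) = n - m"
  proof -
    have "Q \<inter> (E - P) = (Q \<inter> E) - (Q \<inter> P)" by blast
    then show ?thesis unfolding n_def m_def using card_Diff_subset[OF _ QP] finQ by simp
  qed
  show ?thesis
  proof (cases "Q \<inter> E = {}")
    case True
    then have "Q \<inter> P = {}" using QP by blast
    then show ?thesis using True nm by (simp add: n_def)
  next
    case False
    have "finite P" using subfiles_subset_finite[OF order_trans[OF P(2) E]] .
    then have "0 < p" using P(1) by (simp add: p_def card_gt_0_iff)
    have "0 < n" using False finQ by (simp add: n_def card_gt_0_iff)
    have "m \<le> n" unfolding m_def n_def using finQ QP by (simp add: card_mono)
    have sizes: "\<forall>(k, A)\<in>Q \<inter> E. sz k A \<le> clique_size sz Q"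
      using size_le_clique_size[OF finQ] by blast
    have "feasible_packet (Q \<inter> E)" using Q(2) by (rule feasible_packet_subset) blast
    with sizes have "real n * cP \<le> real p * cQ"
      unfolding n_def p_def cP_def cQ_def using False by (intro sbo_output_greedy[OF E out]) auto
    then have "cP / real p \<le> cQ / real n"
      using \<open>0 < p\<close> \<open>0 < n\<close> by (simp add: divide_le_eq le_divide_eq mult.commute)
    then have "cP / real p * real m \<le> cQ / real n * real m" by (rule mult_right_mono) simp
    also have "\<dots> = cQ * (real m / real n)" by simp
    also have "\<dots> \<le> cQ * (harm n - harm (n - m))"
      using harm_diff_ge[OF \<open>m \<le> n\<close>] by (rule mult_left_mono) (simp add: cQ_def)
    finally show ?thesis unfolding nm by (simp add: cP_def cQ_def m_def n_def p_def)
  qed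
qed

lemma greedy_step_le_potential_drop:
  assumes C': "is_clique_cover K sz C'" and E: "E \<subseteq> subfiles K sz" and out: "sbo_output K sz E P"
  shows "real (clique_size sz P) \<le> cover_potential sz C' E - cover_potential sz C' (E - P)"
proof -
  define cP where "cP = real (clique_size sz P)"
  have P: "P \<noteq> {}" "P \<subseteq> E" using sbo_output_clique[OF E out] by (auto simp: is_clique_def)
  have "finite P" using subfiles_subset_finite[OF order_trans[OF P(2) E]] .
  then have "0 < card P" using P(1) by (simp add: card_gt_0_iff)
  have "P = (\<Union>Q\<in>C'. Q \<inter> P)" using C' P(2) E by (auto simp: is_clique_cover_def)
  then have "card P \<le> (\<Sum>Q\<in>C'. card (Q \<inter> P))"
    by (metis card_UN_le clique_cover_finite[OF C'])
  then have "real (card P) \<le> (\<Sum>Q\<in>C'. real (card (Q \<inter> P)))"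
    by (metis of_nat_le_iff of_nat_sum)
  then have "cP * real (card P) \<le> (\<Sum>Q\<in>C'. cP * real (card (Q \<inter> P)))"
    by (simp add: cP_def sum_distrib_left[symmetric] mult_left_mono)
  with \<open>0 < card P\<close> have "cP \<le> (\<Sum>Q\<in>C'. cP * real (card (Q \<inter> P)) / real (card P))"
    by (simp add: sum_distrib_left sum_divide_distrib[symmetric] le_divide_eq)
  also have "\<dots> \<le> (\<Sum>Q\<in>C'. real (clique_size sz Q) *
      (harm (card (Q \<inter> E)) - harm (card (Q \<inter> (E - P)))))"
    unfolding cP_def using clique_cover_clique[OF C'] greedy_charge_le_harm_drop[OF E out]
    by (intro sum_mono) blast
  also have "\<dots> = cover_potential sz C' E - cover_potential sz C' (E - P)"
    by (simp add: cover_potential_def right_diff_distrib sum_subtractf)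
  finally show ?thesis unfolding cP_def .
qed

lemma sacm_run_cost_le_potential:
  assumes "sacm_run K sz E C" "E \<subseteq> subfiles K sz" and C': "is_clique_cover K sz C'"
  shows "real (cover_cost sz C) \<le> cover_potential sz C' E"
  using assms(1,2)
proof (induction rule: sacm_run.induct)
  case finish
  then show ?case by (simp add: cover_cost_def cover_potential_def harm_def)
next
  case (step E P C)
  have "E - P \<subseteq> subfiles K sz" using step.prems by blast
  note IH = step.IH[OF this]
  have C: "(\<forall>Q\<in>C. is_clique K sz Q) \<and> \<Union>C = E - P \<and> finite C"
    using step.hyps(3) \<open>E - P \<subseteq> subfiles K sz\<close> by (rule sacm_run_partition)
  have "P \<noteq> {}" using sbo_output_clique[OF step.prems step.hyps(2)] by (simp add: is_clique_def)
  with C have "P \<notin> C" by blast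
  with C have "real (cover_cost sz (insert P C)) = real (clique_size sz P) + real (cover_cost sz C)"
    by (simp add: cover_cost_def)
  also have "\<dots> \<le> cover_potential sz C' E"
    using greedy_step_le_potential_drop[OF C' step.prems step.hyps(2)] IH by simp
  finally show ?case .
qed

lemma cover_potential_le_cost:
  assumes C': "is_clique_cover K sz C'" and "0 < K"
  shows "cover_potential sz C' E \<le> (1 + ln (real K)) * real (cover_cost sz C')"
proof -
  have "harm (card (Q \<inter> E)) \<le> 1 + ln (real K)" if "Q \<in> C'" for Q
  proof -
    have Q: "Q \<subseteq> subfiles K sz" "feasible_packet Q" using clique_cover_clique[OF C' that] by auto
    have "card (Q \<inter> E) \<le> card Q" using subfiles_subset_finite[OF Q(1)] by (simp add: card_mono)
    also have "\<dots> \<le> K" using Q by (rule card_feasible_packet_le)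
    finally have "harm (card (Q \<inter> E)) \<le> (harm K :: real)" by (rule harm_mono)
    also have "\<dots> \<le> 1 + ln (real K)" using \<open>0 < K\<close> by (rule harm_le_one_plus_ln)
    finally show ?thesis .
  qed
  then have "cover_potential sz C' E \<le> (\<Sum>Q\<in>C'. real (clique_size sz Q) * (1 + ln (real K)))"
    unfolding cover_potential_def by (intro sum_mono mult_left_mono) auto
  also have "\<dots> = (1 + ln (real K)) * real (cover_cost sz C')"
    by (simp add: cover_cost_def sum_distrib_left mult.commute)
  finally show ?thesis .
qed

theorem theorem2:
  fixes K :: nat and sz :: "nat \<Rightarrow> nat set \<Rightarrow> nat"
  assumes "K \<ge> 1"
  shows "(\<exists>C. sacm_run K sz (subfiles K sz) C) \<and>
         (\<forall>C. sacm_run K sz (subfiles K sz) C \<longrightarrow>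
            is_clique_cover K sz C \<and>
            (\<forall>C'. is_clique_cover K sz C' \<longrightarrow>
               real (cover_cost sz C) \<le> (1 + ln (real K)) * real (cover_cost sz C')))"
proof (intro conjI allI impI)
  show "\<exists>C. sacm_run K sz (subfiles K sz) C" by (rule sacm_run_exists) simp
next
  fix C assume run: "sacm_run K sz (subfiles K sz) C"
  show "is_clique_cover K sz C"
    using sacm_run_partition[OF run order_refl] by (simp add: is_clique_cover_def)
  fix C' assume C': "is_clique_cover K sz C'"
  have "real (cover_cost sz C) \<le> cover_potential sz C' (subfiles K sz)"
    using run order_refl C' by (rule sacm_run_cost_le_potential)
  also have "\<dots> \<le> (1 + ln (real K)) * real (cover_cost sz C')"
    using C' assms by (intro cover_potential_le_cost) auto
  finally show "real (cover_cost sz C) \<le> (1 + ln (real K)) * real (cover_cost sz C')" .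
qed

end
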